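(* Let $\Pi$ be a transition kernel on $[0,\infty)$ satisfying the asymptotic kernel assumption with function $b$ of index $\kappa\ge0$ and limit distribution $G$. For $x>0$ and bounded measurable $f$ on $[0,\infty)$ define $\Pi_xf(u)=\int_0^\infty f(v)\,\Pi(xu,b(x)\mathrm dv)$ and $G_1f(u)=\int_0^\infty f(u^\kappa v)\,G(\mathrm dv)$. Let $f$ and $f_x$, $x>0$, be uniformly bounded continuous functions on $[0,\infty)$, and assume either (i) $f_x\to f$ uniformly on compact subsets of $[0,\infty)$ as $x\to\infty$; or (ii) $f_x\to f$ uniformly on compact subsets of $(0,\infty)$ and $G(\{0\})=0$. Then $\Pi_xf_x\to G_1f$ uniformly on compact subsets of $(0,\infty)$ as $x\to\infty$.
   Context: Asymptotic kernel assumption: there exist a function $b$, regularly varying at infinity with index $\kappa\ge0$, and a probability distribution $G$ on $[0,\infty)$ not concentrated on one point, such that $\lim_{x\to\infty}\Pi(x,b(x)A)=G(A)$ for all Borel sets $A\subset[0,\infty)$ with $G(\partial A)=0$ (here $b(x)A=\{b(x)a:a\in A\}$). *)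

theory Defs
  imports "HOL-Probability.Probability"
begin

definition nonneg_borel :: "real measure" where
  "nonneg_borel = restrict_space borel {0..}"

definition transition_kernel :: "(real \<Rightarrow> real measure) \<Rightarrow> bool" where
  "transition_kernel Pk \<longleftrightarrow>
     (\<forall>x\<ge>0. prob_space (Pk x) \<and> sets (Pk x) = sets nonneg_borel) \<and>
     (\<forall>A\<in>sets nonneg_borel. (\<lambda>x. emeasure (Pk x) A) \<in> borel_measurable nonneg_borel)"

definition regularly_varying :: "(real \<Rightarrow> real) \<Rightarrow> real \<Rightarrow> bool" where
  "regularly_varying b \<kappa> \<longleftrightarrow>
     (\<forall>x>0. b x > 0) \<and> b \<in> borel_measurable (restrict_space borel {0<..}) \<and>
     (\<forall>l>0. ((\<lambda>x. b (l * x) / b x) \<longlongrightarrow> l powr \<kappa>) at_top)"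

definition asymptotic_kernel ::
  "(real \<Rightarrow> real measure) \<Rightarrow> (real \<Rightarrow> real) \<Rightarrow> real \<Rightarrow> real measure \<Rightarrow> bool" where
  "asymptotic_kernel Pk b \<kappa> G \<longleftrightarrow>
     regularly_varying b \<kappa> \<and> \<kappa> \<ge> 0 \<and>
     prob_space G \<and> sets G = sets nonneg_borel \<and>
     \<not> (\<exists>c. measure G {c} = 1) \<and>
     (\<forall>A\<in>sets nonneg_borel.
        measure G ((subtopology euclidean {0..}) frontier_of A) = 0 \<longrightarrow>
        ((\<lambda>x. measure (Pk x) ((\<lambda>a. b x * a) ` A)) \<longlongrightarrow> measure G A) at_top)"

text \<open>\<Pk>_x f(u) = \<integral> f(v) \<Pk>(xu, b(x) dv) = \<integral> f(y / b(x)) \<Pk>(xu, dy).\<close>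
definition Pi_op :: "(real \<Rightarrow> real measure) \<Rightarrow> (real \<Rightarrow> real) \<Rightarrow> real \<Rightarrow> (real \<Rightarrow> real) \<Rightarrow> real \<Rightarrow> real" where
  "Pi_op Pk b x f u = (\<integral>y. f (y / b x) \<partial>(Pk (x * u)))"

definition G1_op :: "real measure \<Rightarrow> real \<Rightarrow> (real \<Rightarrow> real) \<Rightarrow> real \<Rightarrow> real" where
  "G1_op G \<kappa> f u = (\<integral>v. f (u powr \<kappa> * v) \<partial>G)"

end

theory Submission
  imports Defs
begin

text \<open>
  By a subsequence argument, uniform convergence on a compact
  K \<subseteq> (0,\<infinity>) reduces to convergence along sequences X n \<rightarrow> \<infinity>, U n \<rightarrow> l > 0
  together with continuity of G_1 f.  Along such sequences put y n = X n U n.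
  The kernel assumption, tested on the intervals [0,x], says that the law \<nu> n
  of z / b(y n) under \<Pi>(y n, dz) converges weakly to G.  Writing
  \<Pi>_{X n} f_{X n}(U n) = \<integral> f_{X n}(r n v) \<nu> n(dv) with r n = b(y n)/b(X n),
  regular variation gives r n \<rightarrow> l^\<kappa> (uniform convergence theorem), and the
  claim follows from the Skorohod representation and dominated convergence,
  since f_{X n}(r n z n) \<rightarrow> f(l^\<kappa> v) whenever z n \<rightarrow> v for G-almost every v.
\<close>

subsection \<open>Uniform convergence theorem for regularly varying functions\<close>

lemma measure_lborel_shift:
  fixes Z :: "real set"
  assumes [measurable]: "Z \<in> sets borel"
  shows "measure lborel {y. a + y \<in> Z} = measure lborel Z"
proof -
  have "measure lborel Z = measure (distr lborel borel ((+) a)) Z"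
    by (simp add: lborel_distr_plus)
  also have "\<dots> = measure lborel {y. a + y \<in> Z}"
    by (subst measure_distr) (auto simp: vimage_def)
  finally show ?thesis by simp
qed

lemma additive_exceptional_set_null:
  fixes k :: "real \<Rightarrow> real" and t :: "nat \<Rightarrow> real"
  assumes [measurable]: "k \<in> borel_measurable borel"
    and k_add: "\<And>s. ((\<lambda>t. k (t + s) - k t) \<longlongrightarrow> 0) at_top"
    and t_lim: "filterlim t at_top sequentially"
    and e: "e > 0"
  shows "(\<lambda>n. measure lborel {y\<in>{0..d}. e \<le> \<bar>k (t n + y) - k (t n)\<bar>}) \<longlonglongrightarrow> 0"
proof -
  define A where "A n = {y\<in>{0..d}. e \<le> \<bar>k (t n + y) - k (t n)\<bar>}" for n
  have [measurable]: "A n \<in> sets borel" for n unfolding A_def by measurable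
  have "(\<lambda>n. integral\<^sup>L lborel (indicator (A n) :: real \<Rightarrow> real)) \<longlonglongrightarrow> integral\<^sup>L lborel (\<lambda>x::real. 0::real)"
  proof (rule integral_dominated_convergence[where w="indicator {0..d}"])
    show "integrable lborel (indicator {0..d} :: real \<Rightarrow> real)"
      by (simp add: integrable_indicator_iff emeasure_lborel_Icc_eq)
    show "AE y in lborel. (\<lambda>n. indicator (A n) y :: real) \<longlonglongrightarrow> 0"
    proof (rule AE_I2)
      fix y :: real
      have "(\<lambda>n. k (t n + y) - k (t n)) \<longlonglongrightarrow> 0"
        using filterlim_compose[OF k_add[of y] t_lim] by simp
      then have "eventually (\<lambda>n. \<bar>k (t n + y) - k (t n)\<bar> < e) sequentially"
        using e by (simp add: tendsto_iff)
      then have "eventually (\<lambda>n. indicator (A n) y = (0::real)) sequentially"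
        by eventually_elim (auto simp: A_def)
      then show "(\<lambda>n. indicator (A n) y :: real) \<longlonglongrightarrow> 0"
        by (rule tendsto_eventually)
    qed
    show "AE y in lborel. norm (indicator (A n) y :: real) \<le> indicator {0..d} y" for n
      by (rule AE_I2) (auto simp: A_def indicator_def)
  qed auto
  moreover have "integral\<^sup>L lborel (indicator (A n) :: real \<Rightarrow> real) = measure lborel (A n)" for n
  proof -
    have "A n \<in> fmeasurable lborel"
      by (rule fmeasurableI2[of "{0..d}"]) (auto simp: A_def fmeasurable_def emeasure_lborel_Icc_eq)
    then show ?thesis by (simp add: fmeasurable_def)
  qed
  ultimately show ?thesis by (simp add: A_def)
qed

text \<open>If it failed
  at some n, the intervals [c,2c] would be covered by two exceptional sets,
  each of measure < c/2.\<close>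
lemma additive_uniform_limit_seq:
  fixes k :: "real \<Rightarrow> real" and t s :: "nat \<Rightarrow> real"
  assumes k_meas[measurable]: "k \<in> borel_measurable borel"
    and k_add: "\<And>s. ((\<lambda>t. k (t + s) - k t) \<longlongrightarrow> 0) at_top"
    and t_lim: "filterlim t at_top sequentially"
    and s_bound: "\<And>n. 0 \<le> s n \<and> s n \<le> c" and c: "c > 0"
  shows "(\<lambda>n. k (t n + s n) - k (t n)) \<longlonglongrightarrow> 0"
  unfolding tendsto_iff
proof (intro allI impI)
  fix \<epsilon> :: real assume "\<epsilon> > 0"
  define e where "e = \<epsilon> / 2"
  have e: "e > 0" using \<open>\<epsilon> > 0\<close> by (simp add: e_def)
  define Y where "Y n = {y\<in>{0..2*c}. e \<le> \<bar>k (t n + y) - k (t n)\<bar>}" for n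
  define Z where "Z n = {y\<in>{0..2*c}. e \<le> \<bar>k ((t n + s n) + y) - k (t n + s n)\<bar>}" for n
  have [measurable]: "Y n \<in> sets borel" "Z n \<in> sets borel" for n
    unfolding Y_def Z_def by measurable
  have ts_lim: "filterlim (\<lambda>n. t n + s n) at_top sequentially"
    by (rule filterlim_at_top_mono[OF t_lim]) (use s_bound in auto)
  have "(\<lambda>n. measure lborel (Y n)) \<longlonglongrightarrow> 0"
    unfolding Y_def by (rule additive_exceptional_set_null[OF k_meas k_add t_lim e])
  then have "eventually (\<lambda>n. measure lborel (Y n) < c/2) sequentially"
    by (rule order_tendstoD) (use c in simp)
  moreover have "(\<lambda>n. measure lborel (Z n)) \<longlonglongrightarrow> 0"
    unfolding Z_def by (rule additive_exceptional_set_null[OF k_meas k_add ts_lim e])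
  then have "eventually (\<lambda>n. measure lborel (Z n) < c/2) sequentially"
    by (rule order_tendstoD) (use c in simp)
  ultimately show "eventually (\<lambda>n. dist (k (t n + s n) - k (t n)) 0 < \<epsilon>) sequentially"
  proof eventually_elim
    case (elim n)
    show ?case
    proof (rule ccontr)
      assume far: "\<not> dist (k (t n + s n) - k (t n)) 0 < \<epsilon>"
      define P where "P = {y. - s n + y \<in> Z n}"
      have [measurable]: "P \<in> sets borel" unfolding P_def by measurable
      have cover: "{c..2*c} \<subseteq> Y n \<union> P"
      proof
        fix y assume y: "y \<in> {c..2*c}"
        have "(t n + s n) + (- s n + y) = t n + y" by simp
        with far y s_bound[of n] show "y \<in> Y n \<union> P"
          by (auto simp: Y_def P_def Z_def e_def dist_real_def abs_if split: if_splits)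
      qed
      have fin: "Y n \<union> P \<in> fmeasurable lborel"
        by (rule fmeasurableI2[of "{0..3*c}"])
           (use s_bound[of n] in \<open>auto simp: Y_def P_def Z_def fmeasurable_def\<close>)
      have "c = measure lborel {c..2*c}" using c by simp
      also have "\<dots> \<le> measure lborel (Y n \<union> P)"
        by (rule measure_mono_fmeasurable[OF cover _ fin]) simp
      also have "\<dots> \<le> measure lborel (Y n) + measure lborel P"
        by (rule measure_Un_le) auto
      also have "\<dots> < c"
        using elim measure_lborel_shift[of "Z n" "- s n"] by (simp add: P_def)
      finally show False by simp
    qed
  qed
qed

lemma regularly_varying_log_additive:
  assumes rv: "regularly_varying b \<kappa>"
  defines "k \<equiv> \<lambda>t. ln (b (exp t)) - \<kappa> * t"
  shows "k \<in> borel_measurable borel"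
    and "((\<lambda>t. k (t + s) - k t) \<longlongrightarrow> 0) at_top"
proof -
  have b_pos: "\<And>y. y > 0 \<Longrightarrow> b y > 0"
    and b_meas: "b \<in> borel_measurable (restrict_space borel {0<..})"
    and b_lim: "\<And>l. l > 0 \<Longrightarrow> ((\<lambda>y. b (l * y) / b y) \<longlongrightarrow> l powr \<kappa>) at_top"
    using rv unfolding regularly_varying_def by auto
  have "exp \<in> measurable borel (restrict_space borel {0::real<..})"
    by (rule measurable_restrict_space2) auto
  from measurable_compose[OF this b_meas]
  show "k \<in> borel_measurable borel" unfolding k_def by measurable
  have "((\<lambda>t. b (exp s * exp t) / b (exp t)) \<longlongrightarrow> exp s powr \<kappa>) at_top"
    using filterlim_compose[OF b_lim exp_at_top] by simp
  then have "((\<lambda>t. ln (b (exp s * exp t) / b (exp t)) - \<kappa> * s) \<longlongrightarrow> ln (exp s powr \<kappa>) - \<kappa> * s) at_top"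
    by (intro tendsto_intros) auto
  moreover have "ln (exp s powr \<kappa>) - \<kappa> * s = 0" by (simp add: powr_def)
  moreover have "ln (b (exp s * exp t) / b (exp t)) - \<kappa> * s = k (t + s) - k t" for t
    using b_pos[of "exp s * exp t"] b_pos[of "exp t"]
    by (simp add: k_def ln_div exp_add algebra_simps)
  ultimately show "((\<lambda>t. k (t + s) - k t) \<longlongrightarrow> 0) at_top" by simp
qed

lemma regularly_varying_ratio_seq:
  fixes b :: "real \<Rightarrow> real" and x u :: "nat \<Rightarrow> real"
  assumes rv: "regularly_varying b \<kappa>"
    and x_pos: "\<And>n. x n > 0" and x_lim: "filterlim x at_top sequentially"
    and u_pos: "\<And>n. u n > 0" and u_lim: "u \<longlonglongrightarrow> u0" and u0: "u0 > 0"
  shows "(\<lambda>n. b (x n * u n) / b (x n)) \<longlonglongrightarrow> u0 powr \<kappa>"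
proof -
  define k where "k t = ln (b (exp t)) - \<kappa> * t" for t
  have k_meas: "k \<in> borel_measurable borel"
    and k_add: "\<And>s. ((\<lambda>t. k (t + s) - k t) \<longlongrightarrow> 0) at_top"
    using regularly_varying_log_additive[OF rv] unfolding k_def[abs_def] by auto
  define t where "t n = ln (x n)" for n
  define s where "s n = ln (u n)" for n
  have s_lim: "s \<longlonglongrightarrow> ln u0" unfolding s_def using u_lim u0 by (intro tendsto_intros) auto
  then have "Bseq s" by (rule convergent_imp_Bseq[OF convergentI])
  then obtain a where a: "a > 0" "\<And>n. \<bar>s n\<bar> \<le> a"
    unfolding Bseq_def by auto
  text \<open>Shift t by -a so that both increments s n + a and a lie in [0,2a].\<close>
  define t' where "t' n = t n - a" for n
  have t'_lim: "filterlim t' at_top sequentially"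
    unfolding t'_def t_def
    by (rule filterlim_tendsto_add_at_top[OF tendsto_const filterlim_compose[OF ln_at_top x_lim],
          of "- a", simplified])
  have "(\<lambda>n. k (t' n + (s n + a)) - k (t' n)) \<longlonglongrightarrow> 0"
  proof (rule additive_uniform_limit_seq[OF k_meas k_add t'_lim, of _ "2*a"])
    show "0 \<le> s n + a \<and> s n + a \<le> 2 * a" for n using a(2)[of n] by (simp add: abs_le_iff)
  qed (use a in simp)
  moreover have "(\<lambda>n. k (t' n + a) - k (t' n)) \<longlonglongrightarrow> 0"
    by (rule additive_uniform_limit_seq[OF k_meas k_add t'_lim, of _ "2*a"]) (use a in auto)
  ultimately have "(\<lambda>n. exp ((k (t' n + (s n + a)) - k (t' n)) - (k (t' n + a) - k (t' n)) + \<kappa> * s n))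
      \<longlonglongrightarrow> exp (0 - 0 + \<kappa> * ln u0)"
    by (intro tendsto_intros s_lim)
  moreover have "exp (0 - 0 + \<kappa> * ln u0) = u0 powr \<kappa>" using u0 by (simp add: powr_def)
  moreover have "exp ((k (t' n + (s n + a)) - k (t' n)) - (k (t' n + a) - k (t' n)) + \<kappa> * s n)
      = b (x n * u n) / b (x n)" for n
  proof -
    have "b (x n * u n) > 0" "b (x n) > 0"
      using x_pos[of n] u_pos[of n] rv by (auto simp: regularly_varying_def)
    moreover have "exp (t n + s n) = x n * u n" "exp (t n) = x n"
      using x_pos[of n] u_pos[of n] by (simp_all add: t_def s_def exp_add)
    ultimately show ?thesis
      by (simp add: t'_def k_def exp_diff algebra_simps)
  qed
  ultimately show ?thesis by simp
qed

lemma space_nonneg_borel: "sets N = sets nonneg_borel \<Longrightarrow> space N = {0..}"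
  using sets_eq_imp_space_eq[of N nonneg_borel] by (simp add: nonneg_borel_def space_restrict_space)

lemma borel_measurable_nonneg_borel:
  "sets N = sets nonneg_borel \<Longrightarrow> g \<in> borel_measurable borel \<Longrightarrow> g \<in> borel_measurable N"
  by (subst measurable_cong_sets[of N nonneg_borel borel borel])
     (auto simp: nonneg_borel_def intro: measurable_restrict_space1)

lemma real_distribution_distr_nonneg:
  assumes "prob_space N" "sets N = sets nonneg_borel" "g \<in> borel_measurable borel"
  shows "real_distribution (distr N borel g)"
proof -
  have "prob_space (distr N borel g)"
    by (rule prob_space.prob_space_distr[OF assms(1) borel_measurable_nonneg_borel[OF assms(2,3)]])
  then show ?thesis by (simp add: real_distribution_def real_distribution_axioms_def)
qed

lemma borel_measurable_scaled_pos_part: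
  fixes g :: "real \<Rightarrow> real"
  assumes "continuous_on {0..} g" "r \<ge> 0"
  shows "(\<lambda>v. g (r * max v 0)) \<in> borel_measurable borel"
proof -
  have "continuous_on UNIV (\<lambda>v. g (r * max v 0))"
  proof (rule continuous_on_compose2[OF assms(1)])
    show "continuous_on UNIV (\<lambda>v. r * max v 0)" by (auto intro!: continuous_intros)
  qed (use assms(2) in auto)
  then show ?thesis by (rule borel_measurable_continuous_onI)
qed

lemma frontier_of_Icc_nonneg:
  fixes x :: real
  shows "(subtopology euclidean {0..}) frontier_of {0..x} \<subseteq> {x}"
proof -
  let ?X = "subtopology euclidean {0::real..}"
  have "closedin ?X {0..x}"
    unfolding closedin_subtopology by (rule exI[of _ "{..x}"]) auto
  then have "?X closure_of {0..x} = {0..x}" by (simp add: closure_of_eq)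
  moreover have "openin ?X {0..<x}"
    unfolding openin_subtopology by (rule exI[of _ "{..<x}"]) auto
  then have "{0..<x} \<subseteq> ?X interior_of {0..x}"
    by (rule interior_of_maximal[rotated]) auto
  ultimately show ?thesis unfolding frontier_of_def by force
qed

lemma rescaled_interval_preimage:
  fixes \<beta> x :: real
  assumes "\<beta> > 0"
  shows "(\<lambda>z. z / \<beta>) -` {..x} \<inter> {0..} = (\<lambda>a. \<beta> * a) ` {0..x}"
proof (intro equalityI subsetI)
  fix z assume "z \<in> (\<lambda>z. z / \<beta>) -` {..x} \<inter> {0..}"
  then show "z \<in> (\<lambda>a. \<beta> * a) ` {0..x}"
    using assms by (intro image_eqI[where x="z/\<beta>"]) auto
qed (use assms in \<open>auto simp: field_simps\<close>)

subsection \<open>Weak convergence of the rescaled kernels\<close>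

text \<open>The kernel assumption applied to the sets [0,x] says exactly that the
  distribution functions of z / b(y n) under \<Pi>(y n, dz) converge to that of G at
  every continuity point, i.e. these laws converge weakly to G.\<close>
lemma rescaled_kernel_weak_conv:
  fixes Pk :: "real \<Rightarrow> real measure" and b :: "real \<Rightarrow> real" and y :: "nat \<Rightarrow> real"
  assumes kern: "\<And>n. prob_space (Pk (y n))" "\<And>n. sets (Pk (y n)) = sets nonneg_borel"
    and b_pos: "\<And>n. b (y n) > 0"
    and y_lim: "filterlim y at_top sequentially"
    and pG: "prob_space G" and sG: "sets G = sets nonneg_borel"
    and lim: "\<And>A. A \<in> sets nonneg_borel \<Longrightarrow>
        measure G ((subtopology euclidean {0..}) frontier_of A) = 0 \<Longrightarrow>
        ((\<lambda>x. measure (Pk x) ((\<lambda>a. b x * a) ` A)) \<longlongrightarrow> measure G A) at_top"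
  shows "weak_conv_m (\<lambda>n. distr (Pk (y n)) borel (\<lambda>z. z / b (y n))) (distr G borel (\<lambda>v. v))"
  unfolding weak_conv_m_def weak_conv_def
proof (intro allI impI)
  fix x assume cont: "isCont (cdf (distr G borel (\<lambda>v. v))) x"
  have id_meas: "(\<lambda>v. v) \<in> borel_measurable G" by (rule borel_measurable_nonneg_borel[OF sG]) simp
  have scale_meas: "(\<lambda>z. z / b (y n)) \<in> borel_measurable (Pk (y n))" for n
    by (rule borel_measurable_nonneg_borel[OF kern(2)]) simp
  have "measure (distr G borel (\<lambda>v. v)) {x} = 0"
    using finite_borel_measure.isCont_cdf cont
      real_distribution.finite_borel_measure_M[OF real_distribution_distr_nonneg[OF pG sG, of "\<lambda>v. v"]]
    by auto
  then have G_atom: "measure G ({x} \<inter> {0..}) = 0"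
    by (simp add: measure_distr[OF id_meas] space_nonneg_borel[OF sG])
  have cdf_kernel: "cdf (distr (Pk (y n)) borel (\<lambda>z. z / b (y n))) x
      = measure (Pk (y n)) ((\<lambda>a. b (y n) * a) ` {0..x})" for n
    by (simp add: cdf_def2 measure_distr[OF scale_meas] space_nonneg_borel[OF kern(2)]
        rescaled_interval_preimage[OF b_pos])
  have cdf_G: "cdf (distr G borel (\<lambda>v. v)) x = measure G ({..x} \<inter> {0..})"
    by (simp add: cdf_def2 measure_distr[OF id_meas] space_nonneg_borel[OF sG])
  show "(\<lambda>n. cdf (distr (Pk (y n)) borel (\<lambda>z. z / b (y n))) x) \<longlonglongrightarrow> cdf (distr G borel (\<lambda>v. v)) x"
  proof (cases "x < 0")
    case True
    then have "{0..x} = {}" "{..x} \<inter> {0..} = {}" by auto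
    then show ?thesis by (simp add: cdf_kernel cdf_G)
  next
    case False
    then have interval: "{..x} \<inter> {0..} = {0..x}" "{x} \<inter> {0..} = {x}" by auto
    have interval_meas: "{0..x} \<in> sets nonneg_borel"
      by (simp add: nonneg_borel_def sets_restrict_space_iff)
    have "measure G ((subtopology euclidean {0..}) frontier_of {0..x}) = 0"
    proof (cases "(subtopology euclidean {0..}) frontier_of {0..x} = {}")
      case False
      with frontier_of_Icc_nonneg[of x]
      have "(subtopology euclidean {0..}) frontier_of {0..x} = {x}" by blast
      then show ?thesis using G_atom interval by simp
    qed simp
    from filterlim_compose[OF lim[OF interval_meas this] y_lim]
    show ?thesis by (simp add: cdf_kernel cdf_G interval)
  qed
qed

text \<open>Proof: Skorohod representation and
  dominated convergence.\<close>
lemma weak_conv_integral_limit: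
  fixes \<nu> :: "nat \<Rightarrow> real measure" and \<mu> :: "real measure" and h :: "nat \<Rightarrow> real \<Rightarrow> real"
  assumes distrs: "\<And>n. real_distribution (\<nu> n)" "real_distribution \<mu>"
    and weak: "weak_conv_m \<nu> \<mu>"
    and h_meas: "\<And>n. h n \<in> borel_measurable borel" and g_meas: "g \<in> borel_measurable borel"
    and h_bound: "\<And>n v. \<bar>h n v\<bar> \<le> M"
    and D: "AE v in \<mu>. v \<in> D"
    and h_conv: "\<And>v z. v \<in> D \<Longrightarrow> z \<longlonglongrightarrow> v \<Longrightarrow> (\<lambda>n. h n (z n)) \<longlonglongrightarrow> g v"
  shows "(\<lambda>n. integral\<^sup>L (\<nu> n) (h n)) \<longlonglongrightarrow> integral\<^sup>L \<mu> g"
proof -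
  obtain \<Omega> :: "real measure" and Ys :: "nat \<Rightarrow> real \<Rightarrow> real" and Y :: "real \<Rightarrow> real"
    where "prob_space \<Omega>" and Ys_meas: "\<And>n. Ys n \<in> borel_measurable \<Omega>"
      and Ys_distr: "\<And>n. distr \<Omega> borel (Ys n) = \<nu> n" and "Y \<in> \<Omega> \<rightarrow>\<^sub>M lborel"
      and Y_distr: "distr \<Omega> borel Y = \<mu>"
      and Ys_Y: "\<And>\<omega>. \<omega> \<in> space \<Omega> \<Longrightarrow> (\<lambda>n. Ys n \<omega>) \<longlonglongrightarrow> Y \<omega>"
    using Skorohod[OF distrs weak] by blast
  interpret \<Omega>: prob_space \<Omega> by fact
  have Y_meas: "Y \<in> borel_measurable \<Omega>" using \<open>Y \<in> \<Omega> \<rightarrow>\<^sub>M lborel\<close> by (simp add: measurable_lborel1)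
  have "AE \<omega> in \<Omega>. Y \<omega> \<in> D"
    using D unfolding Y_distr[symmetric] by (rule AE_distrD[OF Y_meas])
  then have "(\<lambda>n. \<integral>\<omega>. h n (Ys n \<omega>) \<partial>\<Omega>) \<longlonglongrightarrow> (\<integral>\<omega>. g (Y \<omega>) \<partial>\<Omega>)"
  proof (intro integral_dominated_convergence[where w="\<lambda>_. M"])
    show "(\<lambda>\<omega>. g (Y \<omega>)) \<in> borel_measurable \<Omega>"
      using measurable_compose[OF Y_meas g_meas] by simp
    show "(\<lambda>\<omega>. h n (Ys n \<omega>)) \<in> borel_measurable \<Omega>" for n
      using measurable_compose[OF Ys_meas h_meas] by simp
    show "AE \<omega> in \<Omega>. norm (h n (Ys n \<omega>)) \<le> M" for n
      using h_bound by simp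
    assume "AE \<omega> in \<Omega>. Y \<omega> \<in> D"
    then show "AE \<omega> in \<Omega>. (\<lambda>n. h n (Ys n \<omega>)) \<longlonglongrightarrow> g (Y \<omega>)"
      using AE_space by eventually_elim (simp add: h_conv Ys_Y)
  qed simp
  moreover have "integral\<^sup>L (\<nu> n) (h n) = (\<integral>\<omega>. h n (Ys n \<omega>) \<partial>\<Omega>)" for n
    unfolding Ys_distr[symmetric] by (rule integral_distr[OF Ys_meas h_meas])
  moreover have "integral\<^sup>L \<mu> g = (\<integral>\<omega>. g (Y \<omega>) \<partial>\<Omega>)"
    unfolding Y_distr[symmetric] by (rule integral_distr[OF Y_meas g_meas])
  ultimately show ?thesis by simp
qed

subsection \<open>The sequential limit of \<Pi>_x f_x\<close>

text \<open>\<Pi>_x g(u) as an integral against the law of z / b(xu) under \<Pi>(xu, dz):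
  since g is evaluated at z / b(x) = (b(xu)/b(x)) \<cdot> (z / b(xu)).\<close>
lemma Pi_op_as_rescaled_integral:
  fixes g :: "real \<Rightarrow> real"
  assumes sets: "sets (Pk (x * u)) = sets nonneg_borel"
    and pos: "b x > 0" "b (x * u) > 0" and g: "continuous_on {0..} g"
  shows "Pi_op Pk b x g u
    = (\<integral>v. g (b (x * u) / b x * max v 0) \<partial>distr (Pk (x * u)) borel (\<lambda>z. z / b (x * u)))"
proof -
  have "Pi_op Pk b x g u = (\<integral>z. g (b (x * u) / b x * max (z / b (x * u)) 0) \<partial>Pk (x * u))"
    unfolding Pi_op_def
    by (rule Bochner_Integration.integral_cong) (use pos in \<open>auto simp: space_nonneg_borel[OF sets]\<close>)
  also have "\<dots> = (\<integral>v. g (b (x * u) / b x * max v 0) \<partial>distr (Pk (x * u)) borel (\<lambda>z. z / b (x * u)))"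
    using pos
    by (intro integral_distr[symmetric] borel_measurable_nonneg_borel[OF sets]
        borel_measurable_scaled_pos_part[OF g]) auto
  finally show ?thesis .
qed

lemma G1_op_as_integral:
  fixes f :: "real \<Rightarrow> real"
  assumes sG: "sets G = sets nonneg_borel" and f: "continuous_on {0..} f"
  shows "G1_op G \<kappa> f l = (\<integral>v. f (l powr \<kappa> * max v 0) \<partial>distr G borel (\<lambda>v. v))"
proof -
  have "G1_op G \<kappa> f l = (\<integral>v. f (l powr \<kappa> * max v 0) \<partial>G)"
    unfolding G1_op_def
    by (rule Bochner_Integration.integral_cong) (auto simp: space_nonneg_borel[OF sG])
  also have "\<dots> = (\<integral>v. f (l powr \<kappa> * max v 0) \<partial>distr G borel (\<lambda>v. v))"
    by (intro integral_distr[symmetric] borel_measurable_nonneg_borel[OF sG]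
        borel_measurable_scaled_pos_part[OF f]) auto
  finally show ?thesis .
qed

lemma uniform_limit_compose_seq:
  fixes F :: "real \<Rightarrow> 'a::topological_space \<Rightarrow> real" and f :: "'a \<Rightarrow> real"
  assumes f_cont: "continuous_on S f"
    and U: "open U" "w \<in> U" and w: "w \<in> S"
    and unif: "uniform_limit (U \<inter> S) F f at_top"
    and X_lim: "filterlim X at_top sequentially"
    and z_lim: "z \<longlonglongrightarrow> w" and z_in: "\<And>n. z n \<in> S"
  shows "(\<lambda>n. F (X n) (z n)) \<longlonglongrightarrow> f w"
proof (rule Lim_transform)
  show "(\<lambda>n. f (z n)) \<longlonglongrightarrow> f w"
    by (rule continuous_on_tendsto_compose[OF f_cont z_lim w]) (use z_in in auto)
  show "(\<lambda>n. F (X n) (z n) - f (z n)) \<longlonglongrightarrow> 0"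
    unfolding tendsto_iff
  proof (intro allI impI)
    fix e :: real assume "e > 0"
    then have "eventually (\<lambda>x. \<forall>u\<in>U \<inter> S. dist (F x u) (f u) < e) at_top"
      using unif unfolding uniform_limit_iff by blast
    from eventually_compose_filterlim[OF this X_lim]
    have "eventually (\<lambda>n. \<forall>u\<in>U \<inter> S. dist (F (X n) u) (f u) < e) sequentially" .
    moreover have "eventually (\<lambda>n. z n \<in> U) sequentially"
      by (rule topological_tendstoD[OF z_lim U])
    ultimately show "eventually (\<lambda>n. dist (F (X n) (z n) - f (z n)) 0 < e) sequentially"
      by eventually_elim (use z_in in \<open>auto simp: dist_real_def\<close>)
  qed
qed

text \<open>A convergence domain for f_x \<rightarrow> f relative to G: a Borel set D \<subseteq> [0,\<infinity>) of
  full G-measure, invariant under positive scaling, near each point of which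
  f_x \<rightarrow> f uniformly.  Case (i) of the theorem gives D = [0,\<infinity>), case (ii)
  gives D = (0,\<infinity>).\<close>
definition convergence_domain ::
  "(real \<Rightarrow> real \<Rightarrow> real) \<Rightarrow> (real \<Rightarrow> real) \<Rightarrow> real measure \<Rightarrow> real set \<Rightarrow> bool" where
  "convergence_domain fx f G D \<longleftrightarrow>
     D \<subseteq> {0..} \<and> D \<in> sets borel \<and> (AE v in G. v \<in> D) \<and>
     (\<forall>\<rho>>0. \<forall>w\<in>D. \<rho> * w \<in> D) \<and>
     (\<forall>w\<in>D. \<exists>U. open U \<and> w \<in> U \<and> uniform_limit (U \<inter> {0..}) fx f at_top)"

lemma Pi_op_limit_seq:
  fixes Pk :: "real \<Rightarrow> real measure" and b :: "real \<Rightarrow> real" and \<kappa> :: real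
    and G :: "real measure" and f :: "real \<Rightarrow> real" and fx :: "real \<Rightarrow> real \<Rightarrow> real"
    and X U :: "nat \<Rightarrow> real" and D :: "real set"
  assumes kern: "\<And>z. z \<ge> 0 \<Longrightarrow> prob_space (Pk z) \<and> sets (Pk z) = sets nonneg_borel"
    and rv: "regularly_varying b \<kappa>"
    and pG: "prob_space G" and sG: "sets G = sets nonneg_borel"
    and lim: "\<And>A. A \<in> sets nonneg_borel \<Longrightarrow>
        measure G ((subtopology euclidean {0..}) frontier_of A) = 0 \<Longrightarrow>
        ((\<lambda>x. measure (Pk x) ((\<lambda>a. b x * a) ` A)) \<longlongrightarrow> measure G A) at_top"
    and cont_f: "continuous_on {0..} f"
    and cont_fx: "\<And>x. x > 0 \<Longrightarrow> continuous_on {0..} (fx x)"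
    and bound: "\<And>x u. x > 0 \<Longrightarrow> u \<ge> 0 \<Longrightarrow> \<bar>fx x u\<bar> \<le> M"
    and D: "convergence_domain fx f G D"
    and X_pos: "\<And>n. X n > 0" and X_lim: "filterlim X at_top sequentially"
    and U_pos: "\<And>n. U n > 0" and U_lim: "U \<longlonglongrightarrow> l" and l: "l > 0"
  shows "(\<lambda>n. Pi_op Pk b (X n) (fx (X n)) (U n)) \<longlonglongrightarrow> G1_op G \<kappa> f l"
proof -
  have b_pos: "\<And>y. y > 0 \<Longrightarrow> b y > 0" using rv unfolding regularly_varying_def by auto
  define y where "y n = X n * U n" for n
  have y_pos: "y n > 0" for n using X_pos[of n] U_pos[of n] by (simp add: y_def)
  have "filterlim (\<lambda>n. U n * X n) at_top sequentially"
    by (rule filterlim_tendsto_pos_mult_at_top[OF U_lim l X_lim])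
  moreover have "y = (\<lambda>n. U n * X n)" by (auto simp: y_def fun_eq_iff)
  ultimately have y_lim: "filterlim y at_top sequentially" by simp
  have kern_y: "prob_space (Pk (y n))" "sets (Pk (y n)) = sets nonneg_borel" for n
    using kern[of "y n"] y_pos[of n] by auto
  define r where "r n = b (y n) / b (X n)" for n
  have r_nonneg: "r n \<ge> 0" for n
    using b_pos[OF y_pos[of n]] b_pos[OF X_pos[of n]] by (simp add: r_def)
  have r_lim: "r \<longlonglongrightarrow> l powr \<kappa>"
    using regularly_varying_ratio_seq[OF rv X_pos X_lim U_pos U_lim l]
    unfolding r_def[abs_def] y_def .
  define \<nu> where "\<nu> n = distr (Pk (y n)) borel (\<lambda>z. z / b (y n))" for n
  have "(\<lambda>n. \<integral>v. fx (X n) (r n * max v 0) \<partial>\<nu> n) \<longlonglongrightarrow> (\<integral>v. f (l powr \<kappa> * max v 0) \<partial>distr G borel (\<lambda>v. v))"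
  proof (rule weak_conv_integral_limit)
    show "real_distribution (\<nu> n)" for n
      unfolding \<nu>_def by (rule real_distribution_distr_nonneg[OF kern_y]) simp
    show "real_distribution (distr G borel (\<lambda>v. v))"
      by (rule real_distribution_distr_nonneg[OF pG sG]) simp
    show "weak_conv_m \<nu> (distr G borel (\<lambda>v. v))"
      unfolding \<nu>_def by (rule rescaled_kernel_weak_conv[OF kern_y b_pos[OF y_pos] y_lim pG sG lim])
    show "(\<lambda>v. fx (X n) (r n * max v 0)) \<in> borel_measurable borel" for n
      by (rule borel_measurable_scaled_pos_part[OF cont_fx[OF X_pos] r_nonneg])
    show "(\<lambda>v. f (l powr \<kappa> * max v 0)) \<in> borel_measurable borel"
      by (rule borel_measurable_scaled_pos_part[OF cont_f]) simp
    show "\<bar>fx (X n) (r n * max v 0)\<bar> \<le> M" for n v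
      using r_nonneg[of n] by (intro bound X_pos) simp
    have "(\<lambda>v. v) \<in> borel_measurable G" by (rule borel_measurable_nonneg_borel[OF sG]) simp
    then show "AE v in distr G borel (\<lambda>v. v). v \<in> D"
      using D by (subst AE_distr_iff) (auto simp: convergence_domain_def)
  next
    fix v z assume v: "v \<in> D" and z_lim: "z \<longlonglongrightarrow> v"
    have v_nonneg: "v \<ge> 0" and "l powr \<kappa> * v \<in> D"
      using v l D by (auto simp: convergence_domain_def)
    then obtain W where W: "open W" "l powr \<kappa> * v \<in> W" "uniform_limit (W \<inter> {0..}) fx f at_top"
      using D by (auto simp: convergence_domain_def)
    have "(\<lambda>n. r n * max (z n) 0) \<longlonglongrightarrow> l powr \<kappa> * max v 0"
      by (intro tendsto_intros r_lim z_lim)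
    then have "(\<lambda>n. fx (X n) (r n * max (z n) 0)) \<longlonglongrightarrow> f (l powr \<kappa> * v)"
      using v_nonneg r_nonneg
      by (intro uniform_limit_compose_seq[OF cont_f W(1,2) _ W(3) X_lim]) auto
    then show "(\<lambda>n. fx (X n) (r n * max (z n) 0)) \<longlonglongrightarrow> f (l powr \<kappa> * max v 0)"
      using v_nonneg by simp
  qed
  moreover have "Pi_op Pk b (X n) (fx (X n)) (U n) = (\<integral>v. fx (X n) (r n * max v 0) \<partial>\<nu> n)" for n
    using Pi_op_as_rescaled_integral[where x="X n" and u="U n" and Pk=Pk and b=b, OF kern_y(2)[of n, unfolded y_def]
        b_pos[OF X_pos[of n]] b_pos[OF y_pos[of n, unfolded y_def]] cont_fx[OF X_pos[of n]]]
    by (simp add: r_def \<nu>_def y_def)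
  ultimately show ?thesis by (simp add: G1_op_as_integral[OF sG cont_f])
qed

subsection \<open>From sequential to locally uniform convergence\<close>

text \<open>G_1 f is continuous on (0,\<infinity>), by dominated convergence in u \<mapsto> u^\<kappa>.\<close>
lemma G1_op_continuous:
  fixes G :: "real measure" and f :: "real \<Rightarrow> real"
  assumes pG: "prob_space G" and sG: "sets G = sets nonneg_borel"
    and cont_f: "continuous_on {0..} f" and bound: "\<And>u. u \<ge> 0 \<Longrightarrow> \<bar>f u\<bar> \<le> M"
  shows "continuous_on {0<..} (G1_op G \<kappa> f)"
proof (rule continuous_on_sequentiallyI)
  interpret G: prob_space G by (rule pG)
  fix U :: "nat \<Rightarrow> real" and l assume "\<forall>n. U n \<in> {0<..}" "l \<in> {0<..}" and U_lim: "U \<longlonglongrightarrow> l"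
  then have U_pos: "\<And>n. U n > 0" and l: "l > 0" by auto
  have meas: "(\<lambda>v. f (c * v)) \<in> borel_measurable G" if "c \<ge> 0" for c
  proof -
    have "(\<lambda>v. f (c * max v 0)) \<in> borel_measurable G"
      by (rule borel_measurable_nonneg_borel[OF sG borel_measurable_scaled_pos_part[OF cont_f that]])
    then show ?thesis
      by (rule measurable_cong[THEN iffD1, rotated]) (simp add: space_nonneg_borel[OF sG])
  qed
  show "(\<lambda>n. G1_op G \<kappa> f (U n)) \<longlonglongrightarrow> G1_op G \<kappa> f l"
    unfolding G1_op_def
  proof (rule integral_dominated_convergence[where w="\<lambda>_. M"])
    show "AE v in G. norm (f (U n powr \<kappa> * v)) \<le> M" for n
      by (rule AE_I2) (auto simp: space_nonneg_borel[OF sG] intro!: bound)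
    show "AE v in G. (\<lambda>n. f (U n powr \<kappa> * v)) \<longlonglongrightarrow> f (l powr \<kappa> * v)"
    proof (rule AE_I2)
      fix v assume "v \<in> space G"
      then have v: "v \<ge> 0" by (simp add: space_nonneg_borel[OF sG])
      have "(\<lambda>n. U n powr \<kappa> * v) \<longlonglongrightarrow> l powr \<kappa> * v"
        using U_lim l by (intro tendsto_intros) auto
      then show "(\<lambda>n. f (U n powr \<kappa> * v)) \<longlonglongrightarrow> f (l powr \<kappa> * v)"
        by (rule continuous_on_tendsto_compose[OF cont_f]) (use v in auto)
    qed
  qed (auto intro: meas)
qed

text \<open>Uniform convergence on a compact set K to a continuous limit follows from
  convergence along all sequences X n \<rightarrow> \<infinity>, U n \<rightarrow> l in K: otherwise some
  sequence stays \<epsilon>-far from the limit, and a convergent subsequence of U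
  contradicts the hypothesis.\<close>
lemma uniform_limit_from_sequences:
  fixes F :: "real \<Rightarrow> 'a::metric_space \<Rightarrow> 'b::metric_space" and g :: "'a \<Rightarrow> 'b"
  assumes K: "compact K" and g_cont: "continuous_on K g"
    and seq: "\<And>X U l. (\<And>n. X n > 0) \<Longrightarrow> filterlim X at_top sequentially \<Longrightarrow>
      (\<And>n. U n \<in> K) \<Longrightarrow> U \<longlonglongrightarrow> l \<Longrightarrow> l \<in> K \<Longrightarrow> (\<lambda>n. F (X n) (U n)) \<longlonglongrightarrow> g l"
  shows "uniform_limit K F g at_top"
  unfolding uniform_limit_iff
proof (intro allI impI)
  fix e :: real assume e: "e > 0"
  show "\<forall>\<^sub>F x in at_top. \<forall>u\<in>K. dist (F x u) (g u) < e"
  proof (rule ccontr)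
    assume "\<not> ?thesis"
    then have "\<forall>n::nat. \<exists>x u. x \<ge> real n + 1 \<and> u \<in> K \<and> \<not> dist (F x u) (g u) < e"
      unfolding eventually_at_top_linorder by (meson linorder_not_le)
    then obtain X V where X: "\<And>n. X n \<ge> real n + 1" and V: "\<And>n. V n \<in> K"
      and far: "\<And>n. \<not> dist (F (X n) (V n)) (g (V n)) < e"
      by metis
    obtain l r where l: "l \<in> K" and r: "strict_mono r" and V_lim: "(V \<circ> r) \<longlonglongrightarrow> l"
      using compact_imp_seq_compact[OF K] V unfolding seq_compact_def by metis
    have X_pos: "X (r n) > 0" for n using X[of "r n"] by (smt (verit) of_nat_0_le_iff)
    have "filterlim (\<lambda>n. X (r n)) at_top sequentially"
    proof (rule filterlim_at_top_mono[OF filterlim_real_sequentially always_eventually], intro allI)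
      fix n
      have "real n \<le> real (r n)" using seq_suble[OF r, of n] by simp
      then show "real n \<le> X (r n)" using X[of "r n"] by linarith
    qed
    then have "(\<lambda>n. F (X (r n)) (V (r n))) \<longlonglongrightarrow> g l"
      using V_lim unfolding comp_def by (intro seq X_pos V l)
    moreover have "(\<lambda>n. g (V (r n))) \<longlonglongrightarrow> g l"
      using g_cont l V V_lim unfolding continuous_on_sequentially by (auto simp: comp_def)
    ultimately have "(\<lambda>n. dist (F (X (r n)) (V (r n))) (g (V (r n)))) \<longlonglongrightarrow> dist (g l) (g l)"
      by (rule tendsto_dist)
    then have "eventually (\<lambda>n. dist (F (X (r n)) (V (r n))) (g (V (r n))) < e) sequentially"
      using e by (auto dest: order_tendstoD(2))
    then show False using far by (auto simp: eventually_sequentially)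
  qed
qed

lemma compact_uniform_imp_local_uniform:
  fixes F :: "real \<Rightarrow> real \<Rightarrow> real" and w e :: real
  assumes unif: "\<forall>K. compact K \<and> K \<subseteq> S \<longrightarrow> uniform_limit K F f at_top"
    and e: "e > 0" and sub: "cball w e \<inter> {0..} \<subseteq> S"
  shows "\<exists>U. open U \<and> w \<in> U \<and> uniform_limit (U \<inter> {0..}) F f at_top"
proof (intro exI conjI)
  have "uniform_limit (cball w e \<inter> {0..}) F f at_top"
    using unif sub compact_Int_closed[OF compact_cball closed_atLeast] by blast
  then show "uniform_limit (ball w e \<inter> {0..}) F f at_top"
    by (rule uniform_limit_on_subset) auto
qed (use e in auto)

lemma convergence_domain_exists:
  fixes fx :: "real \<Rightarrow> real \<Rightarrow> real" and f :: "real \<Rightarrow> real"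
  assumes pG: "prob_space G" and sG: "sets G = sets nonneg_borel"
    and conv: "(\<forall>K. compact K \<and> K \<subseteq> {0..} \<longrightarrow> uniform_limit K fx f at_top)
             \<or> ((\<forall>K. compact K \<and> K \<subseteq> {0<..} \<longrightarrow> uniform_limit K fx f at_top)
                \<and> measure G {0} = 0)"
  obtains D where "convergence_domain fx f G D"
proof (cases "\<forall>K. compact K \<and> K \<subseteq> {0..} \<longrightarrow> uniform_limit K fx f at_top")
  case True
  have "convergence_domain fx f G {0..}"
    unfolding convergence_domain_def
    using compact_uniform_imp_local_uniform[OF True zero_less_one]
    by (auto simp: space_nonneg_borel[OF sG])
  then show ?thesis by (rule that)
next
  case False
  with conv have unif: "\<forall>K. compact K \<and> K \<subseteq> {0<..} \<longrightarrow> uniform_limit K fx f at_top"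
    and G0: "measure G {0} = 0" by auto
  interpret G: prob_space G by (rule pG)
  have "{0} \<in> sets G" by (simp add: sG nonneg_borel_def sets_restrict_space_iff)
  with G0 have "{0} \<in> null_sets G" by (simp add: G.emeasure_eq_measure null_setsI)
  then have "AE v in G. v \<in> {0<..}"
    by (rule AE_mp[OF AE_not_in]) (auto intro!: AE_I2 simp: space_nonneg_borel[OF sG])
  moreover have "\<exists>U. open U \<and> w \<in> U \<and> uniform_limit (U \<inter> {0..}) fx f at_top" if "w > 0" for w
  proof (rule compact_uniform_imp_local_uniform[OF unif, of "w/2"])
    show "cball w (w/2) \<inter> {0..} \<subseteq> {0<..}"
      using that by (auto simp: dist_real_def abs_if split: if_splits)
  qed (use that in simp)
  ultimately have "convergence_domain fx f G {0<..}"
    unfolding convergence_domain_def by auto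
  then show ?thesis by (rule that)
qed

theorem lemma6:
  fixes Pk :: "real \<Rightarrow> real measure" and b :: "real \<Rightarrow> real" and \<kappa> :: real
    and G :: "real measure" and f :: "real \<Rightarrow> real" and fx :: "real \<Rightarrow> real \<Rightarrow> real"
  assumes kernel: "transition_kernel Pk"
    and asym: "asymptotic_kernel Pk b \<kappa> G"
    and cont_f: "continuous_on {0..} f"
    and cont_fx: "\<And>x. x > 0 \<Longrightarrow> continuous_on {0..} (fx x)"
    and bdd: "\<exists>M. \<forall>x>0. \<forall>u\<ge>0. \<bar>fx x u\<bar> \<le> M \<and> \<bar>f u\<bar> \<le> M"
    and conv: "(\<forall>K. compact K \<and> K \<subseteq> {0..} \<longrightarrow> uniform_limit K fx f at_top)
             \<or> ((\<forall>K. compact K \<and> K \<subseteq> {0<..} \<longrightarrow> uniform_limit K fx f at_top)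
                \<and> measure G {0} = 0)"
  shows "\<forall>K. compact K \<and> K \<subseteq> {0<..} \<longrightarrow>
           uniform_limit K (\<lambda>x u. Pi_op Pk b x (fx x) u) (G1_op G \<kappa> f) at_top"
proof (intro allI impI)
  fix K :: "real set" assume K: "compact K \<and> K \<subseteq> {0<..}"
  obtain M where M: "\<And>x u. x > 0 \<Longrightarrow> u \<ge> 0 \<Longrightarrow> \<bar>fx x u\<bar> \<le> M \<and> \<bar>f u\<bar> \<le> M"
    using bdd by blast
  have kern: "\<And>z. z \<ge> 0 \<Longrightarrow> prob_space (Pk z) \<and> sets (Pk z) = sets nonneg_borel"
    using kernel unfolding transition_kernel_def by blast
  have rv: "regularly_varying b \<kappa>" and pG: "prob_space G" and sG: "sets G = sets nonneg_borel"
    and lim: "\<And>A. A \<in> sets nonneg_borel \<Longrightarrow>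
        measure G ((subtopology euclidean {0..}) frontier_of A) = 0 \<Longrightarrow>
        ((\<lambda>x. measure (Pk x) ((\<lambda>a. b x * a) ` A)) \<longlongrightarrow> measure G A) at_top"
    using asym unfolding asymptotic_kernel_def by blast+
  obtain D where D: "convergence_domain fx f G D"
    using convergence_domain_exists[OF pG sG conv] .
  have "continuous_on K (G1_op G \<kappa> f)"
    using G1_op_continuous[OF pG sG cont_f, of M] M[of 1] K by (auto intro: continuous_on_subset)
  then show "uniform_limit K (\<lambda>x u. Pi_op Pk b x (fx x) u) (G1_op G \<kappa> f) at_top"
  proof (rule uniform_limit_from_sequences[OF conjunct1[OF K]])
    fix X U l assume X: "\<And>n. X n > (0::real)" "filterlim X at_top sequentially"
      and U: "\<And>n. U n \<in> K" "U \<longlonglongrightarrow> l" and l: "l \<in> K"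
    have "U n > 0" for n using U(1)[of n] K by auto
    with X U(2) l K show "(\<lambda>n. Pi_op Pk b (X n) (fx (X n)) (U n)) \<longlonglongrightarrow> G1_op G \<kappa> f l"
      using M by (intro Pi_op_limit_seq[OF kern rv pG sG lim cont_f cont_fx _ D]) auto
  qed
qed

end
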